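(* Let $\mathcal{X}=\{A\in\mathcal{M}_d: A=A^\dagger,\ \operatorname{tr}A=0\}$, viewed as a real vector space, with basis consisting of $\sigma_x^{jk}=|j\rangle\langle k|+|k\rangle\langle j|$ and $\sigma_y^{jk}=-i(|j\rangle\langle k|-|k\rangle\langle j|)$ for $1\le j<k\le d$, and $\sigma_z^j=|j\rangle\langle j|-|j+1\rangle\langle j+1|$ for $j=1,\dots,d-1$. Let $\mathcal{V}=\{A\mapsto UAU^\dagger: U\in\mathcal{M}_d\text{ unitary}\}$, regarded as a set of real-linear maps on $\mathcal{X}$, and let $\mathrm{zerospan}_{\mathbb{R}}\mathcal{V}$ denote the set of all finite real linear combinations $\sum_i\lambda_i V_i$ with $V_i\in\mathcal{V}$, $\lambda_i\in\mathbb{R}$ and $\sum_i\lambda_i=0$. Then for each basis vector $B$ of $\mathcal{X}$ listed above there exists $T\in\mathrm{zerospan}_{\mathbb{R}}\mathcal{V}$ with $T(B)=B$ and $T(B')=0$ for every other basis vector $B'$ in the list.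
   Context: $\{|1\rangle,\dots,|d\rangle\}$ is the standard basis of $\mathbb{C}^d$. *)

theory Defs
  imports "Jordan_Normal_Form.Schur_Decomposition"
begin

(* Matrices are d x d complex JNF matrices; the standard basis |1>,...,|d>
   is indexed 0,...,d-1. *)

definition ketbra :: "nat \<Rightarrow> nat \<Rightarrow> nat \<Rightarrow> complex mat" where
  "ketbra d j k = mat d d (\<lambda>(a, b). if a = j \<and> b = k then 1 else 0)"

definition unitary_mat :: "nat \<Rightarrow> complex mat \<Rightarrow> bool" where
  "unitary_mat d U \<longleftrightarrow> U \<in> carrier_mat d d \<and>
     U * mat_adjoint U = 1\<^sub>m d \<and> mat_adjoint U * U = 1\<^sub>m d"

definition sigma_x :: "nat \<Rightarrow> nat \<Rightarrow> nat \<Rightarrow> complex mat" where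
  "sigma_x d j k = ketbra d j k + ketbra d k j"

definition sigma_y :: "nat \<Rightarrow> nat \<Rightarrow> nat \<Rightarrow> complex mat" where
  "sigma_y d j k = (- \<i>) \<cdot>\<^sub>m (ketbra d j k - ketbra d k j)"

definition sigma_z :: "nat \<Rightarrow> nat \<Rightarrow> complex mat" where
  "sigma_z d j = ketbra d j j - ketbra d (j + 1) (j + 1)"

definition herm_basis :: "nat \<Rightarrow> complex mat set" where
  "herm_basis d =
     {sigma_x d j k | j k. j < k \<and> k < d} \<union>
     {sigma_y d j k | j k. j < k \<and> k < d} \<union>
     {sigma_z d j | j. j + 1 < d}"

definition conj_comb :: "nat \<Rightarrow> (nat \<Rightarrow> real) \<Rightarrow> (nat \<Rightarrow> complex mat) \<Rightarrow> complex mat \<Rightarrow> complex mat" where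
  "conj_comb n lam U A =
     foldr (+) (map (\<lambda>i. complex_of_real (lam i) \<cdot>\<^sub>m (U i * A * mat_adjoint (U i))) [0..<n])
       (0\<^sub>m (dim_row A) (dim_col A))"

definition zerospan_conj :: "nat \<Rightarrow> (complex mat \<Rightarrow> complex mat) set" where
  "zerospan_conj d = {conj_comb n lam U | n lam U.
      (\<forall>i<n. unitary_mat d (U i)) \<and> (\<Sum>i<n. lam i) = 0}"

end

theory Submission
  imports Defs
begin

text \<open>All maps used are real combinations of conjugations \<open>A \<mapsto> M A M\<^sup>\<dagger>\<close> by monomial unitaries
  \<open>M\<close> (a permutation matrix times a diagonal phase), which act entrywise. Averaging the identity
  with the conjugation by a sign flip at \<open>a\<close> kills the entries with exactly one index equal to
  \<open>a\<close>; composing these averages over all \<open>a \<noteq> j, k\<close> and subtracting the diagonal pinching leaves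
  only the entries \<open>(j, k)\<close> and \<open>(k, j)\<close>, and symmetrising or antisymmetrising with the
  transposition \<open>(j k)\<close> then extracts the \<open>\<sigma>\<^sub>x\<^sup>j\<^sup>k\<close> and \<open>\<sigma>\<^sub>y\<^sup>j\<^sup>k\<close> coordinates. For \<open>\<sigma>\<^sub>z\<^sup>j\<close>, permutations of
  the diagonal make the difference of the \<open>(j, j)\<close> and \<open>(j+1, j+1)\<close> entries equal to \<open>d\<close> times
  the coordinate \<open>\<Sum>\<^sub>a\<^sub>\<le>\<^sub>j A\<^sub>a\<^sub>a\<close> of a traceless diagonal matrix. Each final combination is a
  composite with a weight-zero factor, so its coefficients sum to zero.\<close>

definition monomial_mat :: "nat \<Rightarrow> (nat \<Rightarrow> nat) \<Rightarrow> (nat \<Rightarrow> complex) \<Rightarrow> complex mat" where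
  "monomial_mat d \<sigma> \<phi> = mat d d (\<lambda>(p, a). if a = \<sigma> p then \<phi> p else 0)"

lemma dim_mat_adjoint [simp]:
  "dim_row (mat_adjoint A) = dim_col A" "dim_col (mat_adjoint A) = dim_row A"
  unfolding mat_adjoint_def by simp_all

lemma mat_adjoint_carrier: "U \<in> carrier_mat d d \<Longrightarrow> mat_adjoint U \<in> carrier_mat d d"
  by (intro carrier_matI) auto

lemma index_mat_adjoint:
  "U \<in> carrier_mat d d \<Longrightarrow> i < d \<Longrightarrow> j < d \<Longrightarrow> mat_adjoint U $$ (i, j) = cnj (U $$ (j, i))"
  unfolding mat_adjoint_def by (simp add: mat_of_rows_index)

lemma dim_monomial_mat [simp]:
  "dim_row (monomial_mat d \<sigma> \<phi>) = d" "dim_col (monomial_mat d \<sigma> \<phi>) = d"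
  by (simp_all add: monomial_mat_def)

lemma index_monomial_mat [simp]:
  "p < d \<Longrightarrow> a < d \<Longrightarrow> monomial_mat d \<sigma> \<phi> $$ (p, a) = (if a = \<sigma> p then \<phi> p else 0)"
  by (simp add: monomial_mat_def)

lemma monomial_mat_carrier [simp]: "monomial_mat d \<sigma> \<phi> \<in> carrier_mat d d"
  by (intro carrier_matI) simp_all

lemma index_monomial_mat_mult:
  assumes "A \<in> carrier_mat d d" "p < d" "b < d" "\<sigma> p < d"
  shows "(monomial_mat d \<sigma> \<phi> * A) $$ (p, b) = \<phi> p * A $$ (\<sigma> p, b)"
proof -
  have "(monomial_mat d \<sigma> \<phi> * A) $$ (p, b) = (\<Sum>a<d. monomial_mat d \<sigma> \<phi> $$ (p, a) * A $$ (a, b))"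
    using assms by (auto simp: scalar_prod_def atLeast0LessThan intro!: sum.cong)
  also have "\<dots> = (\<Sum>a<d. if a = \<sigma> p then \<phi> p * A $$ (a, b) else 0)"
    using assms(2) by (intro sum.cong) auto
  finally show ?thesis
    using assms by simp
qed

lemma index_monomial_conj:
  assumes "A \<in> carrier_mat d d" "\<sigma> permutes {..<d}" "p < d" "q < d"
  shows "(monomial_mat d \<sigma> \<phi> * A * mat_adjoint (monomial_mat d \<sigma> \<phi>)) $$ (p, q)
           = \<phi> p * A $$ (\<sigma> p, \<sigma> q) * cnj (\<phi> q)"
proof -
  let ?M = "monomial_mat d \<sigma> \<phi>"
  have \<sigma>: "\<sigma> p < d" "\<sigma> q < d"
    using assms(2-4) permutes_in_image by fastforce+
  have MA: "?M * A \<in> carrier_mat d d"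
    using mult_carrier_mat[OF monomial_mat_carrier assms(1)] .
  have "(?M * A * mat_adjoint ?M) $$ (p, q) = row (?M * A) p \<bullet> col (mat_adjoint ?M) q"
    using MA assms(3,4) by (intro index_mult_mat(1)) auto
  also have "\<dots> = (\<Sum>b<d. (?M * A) $$ (p, b) * cnj (?M $$ (q, b)))"
    using MA assms(3,4) unfolding scalar_prod_def
    by (auto simp: atLeast0LessThan index_mat_adjoint[OF monomial_mat_carrier] simp del: index_mult_mat intro!: sum.cong)
  also have "\<dots> = (\<Sum>b<d. if b = \<sigma> q then \<phi> p * A $$ (\<sigma> p, b) * cnj (\<phi> q) else 0)"
    using assms \<sigma> by (intro sum.cong) (auto simp: index_monomial_mat_mult simp del: index_mult_mat)
  finally show ?thesis
    using \<sigma> by simp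
qed

lemma unitary_monomial_mat:
  assumes \<sigma>: "\<sigma> permutes {..<d}" and \<phi>: "\<And>x. cmod (\<phi> x) = 1"
  shows "unitary_mat d (monomial_mat d \<sigma> \<phi>)"
proof -
  let ?M = "monomial_mat d \<sigma> \<phi>"
  have "?M * mat_adjoint ?M = 1\<^sub>m d"
  proof (rule eq_matI)
    fix p q assume "p < dim_row (1\<^sub>m d)" "q < dim_col (1\<^sub>m d)"
    then have pq: "p < d" "q < d" by simp_all
    then have \<sigma>pq: "\<sigma> p < d" "\<sigma> q < d" "\<sigma> p = \<sigma> q \<longleftrightarrow> p = q"
      using permutes_in_image[OF \<sigma>] permutes_inj[OF \<sigma>] by (auto simp: inj_eq)
    have "(?M * mat_adjoint ?M) $$ (p, q) = (?M * 1\<^sub>m d * mat_adjoint ?M) $$ (p, q)"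
      by (simp only: right_mult_one_mat[OF monomial_mat_carrier])
    also have "\<dots> = \<phi> p * 1\<^sub>m d $$ (\<sigma> p, \<sigma> q) * cnj (\<phi> q)"
      by (rule index_monomial_conj[OF one_carrier_mat \<sigma> pq])
    also have "\<dots> = 1\<^sub>m d $$ (p, q)"
    proof -
      have "\<phi> p * cnj (\<phi> p) = 1"
        by (metis complex_norm_square \<phi> of_real_1 power_one)
      then show ?thesis
        using pq \<sigma>pq by (cases "p = q") simp_all
    qed
    finally show "(?M * mat_adjoint ?M) $$ (p, q) = 1\<^sub>m d $$ (p, q)" .
  qed simp_all
  moreover from this have "mat_adjoint ?M * ?M = 1\<^sub>m d"
    by (rule mat_mult_left_right_inverse[OF monomial_mat_carrier mat_adjoint_carrier[OF monomial_mat_carrier]])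
  ultimately show ?thesis
    unfolding unitary_mat_def by simp
qed

text \<open>A monomial conjugation term \<open>(\<lambda>, \<sigma>, \<phi>)\<close> stands for \<open>\<lambda>\<close> times the conjugation by \<open>monomial_mat d \<sigma> \<phi>\<close>;
  a list of triples is a formal sum of such maps.\<close>

type_synonym mconj_term = "real \<times> (nat \<Rightarrow> nat) \<times> (nat \<Rightarrow> complex)"

definition mconj_eval :: "mconj_term list \<Rightarrow> (nat \<Rightarrow> nat \<Rightarrow> complex) \<Rightarrow> nat \<Rightarrow> nat \<Rightarrow> complex" where
  "mconj_eval xs f p q = (\<Sum>(l, \<sigma>, \<phi>)\<leftarrow>xs. of_real l * (\<phi> p * f (\<sigma> p) (\<sigma> q) * cnj (\<phi> q)))"

definition valid_mconj :: "nat \<Rightarrow> mconj_term list \<Rightarrow> bool" where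
  "valid_mconj d xs \<longleftrightarrow>
     (\<forall>t \<in> set xs. fst (snd t) permutes {..<d} \<and> (\<forall>x. cmod (snd (snd t) x) = 1))"

definition mconj_weight :: "mconj_term list \<Rightarrow> real" where
  "mconj_weight xs = sum_list (map fst xs)"

lemma foldr_add_zero_mat:
  assumes "\<And>x. x \<in> set ys \<Longrightarrow> g x \<in> carrier_mat d d"
  shows "foldr (+) (map g ys) (0\<^sub>m d d) = mat d d (\<lambda>(p, q). \<Sum>x\<leftarrow>ys. g x $$ (p, q))"
  using assms
proof (induction ys)
  case Nil
  show ?case
    by (rule eq_matI) auto
next
  case (Cons y ys)
  then have "g y \<in> carrier_mat d d"
    by simp
  with Cons show ?case
    by (intro eq_matI) auto
qed

lemma conj_comb_eq_mat:
  assumes "A \<in> carrier_mat d d" "\<And>i. U i \<in> carrier_mat d d"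
  shows "conj_comb n lam U A
           = mat d d (\<lambda>(p, q). \<Sum>i\<leftarrow>[0..<n]. of_real (lam i) * (U i * A * mat_adjoint (U i)) $$ (p, q))"
proof -
  have "conj_comb n lam U A
      = mat d d (\<lambda>(p, q). \<Sum>i\<leftarrow>[0..<n]. (of_real (lam i) \<cdot>\<^sub>m (U i * A * mat_adjoint (U i))) $$ (p, q))"
    using assms unfolding conj_comb_def carrier_matD[OF assms(1)]
    by (intro foldr_add_zero_mat) (meson assms mult_carrier_mat smult_carrier_mat mat_adjoint_carrier)
  also have "\<dots> = mat d d (\<lambda>(p, q). \<Sum>i\<leftarrow>[0..<n]. of_real (lam i) * (U i * A * mat_adjoint (U i)) $$ (p, q))"
    using carrier_matD[OF assms(2)] by (intro eq_matI) simp_all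
  finally show ?thesis .
qed

lemma zerospan_conj_mconj_eval:
  assumes "valid_mconj d xs" "mconj_weight xs = 0"
  obtains T where "T \<in> zerospan_conj d"
    "\<And>A. A \<in> carrier_mat d d \<Longrightarrow> T A = mat d d (\<lambda>(p, q). mconj_eval xs (\<lambda>i j. A $$ (i, j)) p q)"
proof
  let ?n = "length xs"
  define lam where "lam i = fst (xs ! i)" for i
  define U where "U i = monomial_mat d (fst (snd (xs ! i))) (snd (snd (xs ! i)))" for i
  have "unitary_mat d (U i)" if "i < ?n" for i
    using assms(1) nth_mem[OF that] unfolding valid_mconj_def U_def
    by (auto intro!: unitary_monomial_mat)
  moreover have "(\<Sum>i<?n. lam i) = 0"
    using assms(2) by (simp add: mconj_weight_def lam_def sum_list_sum_nth atLeast0LessThan)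
  ultimately show "conj_comb ?n lam U \<in> zerospan_conj d"
    unfolding zerospan_conj_def by blast
  fix A :: "complex mat"
  assume A: "A \<in> carrier_mat d d"
  have U: "U i \<in> carrier_mat d d" for i
    by (simp add: U_def)
  have "conj_comb ?n lam U A = mat d d (\<lambda>(p, q). mconj_eval xs (\<lambda>i j. A $$ (i, j)) p q)"
    unfolding conj_comb_eq_mat[OF A U]
  proof (intro eq_matI, simp_all)
    fix p q
    assume pq: "p < d" "q < d"
    define h where "h = (\<lambda>(l, \<sigma>, \<phi>). of_real l * (\<phi> p * A $$ (\<sigma> p, \<sigma> q) * cnj (\<phi> q)) :: complex)"
    have "of_real (lam i) * (U i * A * mat_adjoint (U i)) $$ (p, q) = h (xs ! i)" if "i < ?n" for i
    proof -
      obtain l \<sigma> \<phi> where xi: "xs ! i = (l, \<sigma>, \<phi>)"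
        by (cases "xs ! i")
      then have "\<sigma> permutes {..<d}"
        using assms(1) nth_mem[OF that] unfolding valid_mconj_def by auto
      then show ?thesis
        using index_monomial_conj[OF A _ pq, of \<sigma> \<phi>] by (simp add: lam_def U_def h_def xi)
    qed
    then have "map (\<lambda>i. of_real (lam i) * (U i * A * mat_adjoint (U i)) $$ (p, q)) [0..<?n] = map h xs"
      by (intro nth_equalityI) auto
    then show "(\<Sum>i\<leftarrow>[0..<?n]. of_real (lam i) * (U i * A * mat_adjoint (U i)) $$ (p, q))
        = mconj_eval xs (\<lambda>i j. A $$ (i, j)) p q"
      by (simp add: mconj_eval_def h_def)
  qed
  then show "conj_comb ?n lam U A = mat d d (\<lambda>(p, q). mconj_eval xs (\<lambda>i j. A $$ (i, j)) p q)" .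
qed

definition mconj_scale :: "real \<Rightarrow> mconj_term list \<Rightarrow> mconj_term list" where
  "mconj_scale c xs = map (\<lambda>(l, u). (c * l, u)) xs"

definition mconj_comp :: "mconj_term list \<Rightarrow> mconj_term list \<Rightarrow> mconj_term list" where
  "mconj_comp xs ys =
     concat (map (\<lambda>(l, \<sigma>, \<phi>). map (\<lambda>(m, \<tau>, \<psi>). (l * m, \<tau> \<circ> \<sigma>, \<lambda>p. \<phi> p * \<psi> (\<sigma> p))) ys) xs)"

lemma mconj_eval_Nil [simp]: "mconj_eval [] f p q = 0"
  by (simp add: mconj_eval_def)

lemma mconj_eval_append [simp]: "mconj_eval (xs @ ys) f p q = mconj_eval xs f p q + mconj_eval ys f p q"
  by (simp add: mconj_eval_def)

lemma mconj_eval_concat: "mconj_eval (concat (map g as)) f p q = (\<Sum>a\<leftarrow>as. mconj_eval (g a) f p q)"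
  by (induction as) simp_all

lemma mconj_eval_scale [simp]: "mconj_eval (mconj_scale c xs) f p q = of_real c * mconj_eval xs f p q"
  by (induction xs) (auto simp: mconj_eval_def mconj_scale_def algebra_simps)

lemma mconj_eval_comp [simp]: "mconj_eval (mconj_comp xs ys) f p q = mconj_eval xs (mconj_eval ys f) p q"
proof (induction xs)
  case Nil
  show ?case
    by (simp add: mconj_comp_def)
next
  case (Cons x xs)
  obtain l \<sigma> \<phi> where x: "x = (l, \<sigma>, \<phi>)"
    by (cases x)
  have "mconj_eval (map (\<lambda>(m, \<tau>, \<psi>). (l * m, \<tau> \<circ> \<sigma>, \<lambda>p. \<phi> p * \<psi> (\<sigma> p))) ys) f p q
      = of_real l * (\<phi> p * mconj_eval ys f (\<sigma> p) (\<sigma> q) * cnj (\<phi> q))"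
    by (induction ys) (auto simp: mconj_eval_def algebra_simps)
  with Cons show ?case
    by (simp add: mconj_comp_def mconj_eval_def x)
qed

lemma mconj_weight_Nil [simp]: "mconj_weight [] = 0"
  by (simp add: mconj_weight_def)

lemma mconj_weight_append [simp]: "mconj_weight (xs @ ys) = mconj_weight xs + mconj_weight ys"
  by (simp add: mconj_weight_def)

lemma mconj_weight_scale [simp]: "mconj_weight (mconj_scale c xs) = c * mconj_weight xs"
  by (induction xs) (auto simp: mconj_weight_def mconj_scale_def algebra_simps)

lemma mconj_weight_comp [simp]: "mconj_weight (mconj_comp xs ys) = mconj_weight xs * mconj_weight ys"
proof (induction xs)
  case Nil
  show ?case
    by (simp add: mconj_comp_def mconj_weight_def)
next
  case (Cons x xs)
  obtain l \<sigma> \<phi> where x: "x = (l, \<sigma>, \<phi>)"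
    by (cases x)
  have "mconj_weight (map (\<lambda>(m, \<tau>, \<psi>). (l * m, \<tau> \<circ> \<sigma>, \<lambda>p. \<phi> p * \<psi> (\<sigma> p))) ys) = l * mconj_weight ys"
    by (induction ys) (auto simp: mconj_weight_def algebra_simps)
  with Cons show ?case
    by (simp add: mconj_comp_def mconj_weight_def x algebra_simps)
qed

lemma valid_mconj_append [simp]: "valid_mconj d (xs @ ys) \<longleftrightarrow> valid_mconj d xs \<and> valid_mconj d ys"
  by (auto simp: valid_mconj_def)

lemma valid_mconj_concat: "(\<And>a. a \<in> set as \<Longrightarrow> valid_mconj d (g a)) \<Longrightarrow> valid_mconj d (concat (map g as))"
  by (auto simp: valid_mconj_def)

lemma valid_mconj_scale [simp]: "valid_mconj d (mconj_scale c xs) \<longleftrightarrow> valid_mconj d xs"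
  by (auto simp: valid_mconj_def mconj_scale_def split_beta)

lemma valid_mconj_comp:
  assumes "valid_mconj d xs" "valid_mconj d ys"
  shows "valid_mconj d (mconj_comp xs ys)"
  unfolding valid_mconj_def
proof
  fix t
  assume "t \<in> set (mconj_comp xs ys)"
  then obtain l \<sigma> \<phi> m \<tau> \<psi> where "(l, \<sigma>, \<phi>) \<in> set xs" "(m, \<tau>, \<psi>) \<in> set ys"
    and t: "t = (l * m, \<tau> \<circ> \<sigma>, \<lambda>p. \<phi> p * \<psi> (\<sigma> p))"
    unfolding mconj_comp_def by (auto simp: o_def)
  with assms show "fst (snd t) permutes {..<d} \<and> (\<forall>x. cmod (snd (snd t) x) = 1)"
    unfolding valid_mconj_def by (fastforce simp: permutes_compose norm_mult)
qed

definition mconj_id :: "mconj_term list" where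
  "mconj_id = [(1, id, \<lambda>_. 1)]"

definition mconj_flip :: "nat \<Rightarrow> mconj_term list" where
  "mconj_flip a = [(1, id, \<lambda>p. if p = a then -1 else 1)]"

definition mconj_swap :: "nat \<Rightarrow> nat \<Rightarrow> mconj_term list" where
  "mconj_swap a b = [(1, transpose a b, \<lambda>_. 1)]"

lemma mconj_eval_id [simp]: "mconj_eval mconj_id f p q = f p q"
  by (simp add: mconj_id_def mconj_eval_def)

lemma mconj_eval_flip [simp]:
  "mconj_eval (mconj_flip a) f p q = (if (p = a) = (q = a) then f p q else - f p q)"
  by (simp add: mconj_flip_def mconj_eval_def)

lemma mconj_eval_swap [simp]:
  "mconj_eval (mconj_swap a b) f p q = f (transpose a b p) (transpose a b q)"
  by (simp add: mconj_swap_def mconj_eval_def)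

lemma mconj_weight_id [simp]: "mconj_weight mconj_id = 1"
  and mconj_weight_flip [simp]: "mconj_weight (mconj_flip a) = 1"
  and mconj_weight_swap [simp]: "mconj_weight (mconj_swap a b) = 1"
  by (simp_all add: mconj_weight_def mconj_id_def mconj_flip_def mconj_swap_def)

lemma valid_mconj_id [simp]: "valid_mconj d mconj_id"
  and valid_mconj_flip [simp]: "valid_mconj d (mconj_flip a)"
  by (simp_all add: valid_mconj_def mconj_id_def mconj_flip_def)

lemma valid_mconj_swap: "a < d \<Longrightarrow> b < d \<Longrightarrow> valid_mconj d (mconj_swap a b)"
  by (simp add: valid_mconj_def mconj_swap_def permutes_swap_id)

definition mconj_block :: "nat \<Rightarrow> mconj_term list" where
  "mconj_block a = mconj_scale (1 / 2) (mconj_id @ mconj_flip a)"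

fun mconj_blocks :: "nat list \<Rightarrow> mconj_term list" where
  "mconj_blocks [] = mconj_id"
| "mconj_blocks (a # as) = mconj_comp (mconj_block a) (mconj_blocks as)"

lemma mconj_eval_blocks:
  "mconj_eval (mconj_blocks as) f p q = (if \<forall>a \<in> set as. (p = a) = (q = a) then f p q else 0)"
  by (induction as arbitrary: f) (auto simp: mconj_block_def)

lemma mconj_weight_blocks [simp]: "mconj_weight (mconj_blocks as) = 1"
  by (induction as) (simp_all add: mconj_block_def)

lemma valid_mconj_blocks [simp]: "valid_mconj d (mconj_blocks as)"
  by (induction as) (simp_all add: mconj_block_def valid_mconj_comp)

definition mconj_diag :: "nat \<Rightarrow> mconj_term list" where
  "mconj_diag d = mconj_blocks [0..<d]"

lemma mconj_eval_diag: "p < d \<Longrightarrow> q < d \<Longrightarrow> mconj_eval (mconj_diag d) f p q = (if p = q then f p q else 0)"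
  by (auto simp: mconj_diag_def mconj_eval_blocks)

definition mconj_pair :: "nat \<Rightarrow> nat \<Rightarrow> nat \<Rightarrow> mconj_term list" where
  "mconj_pair d j k = mconj_blocks (filter (\<lambda>a. a \<noteq> j \<and> a \<noteq> k) [0..<d]) @ mconj_scale (-1) (mconj_diag d)"

lemma mconj_eval_pair:
  assumes "p < d" "q < d"
  shows "mconj_eval (mconj_pair d j k) f p q = (if p \<noteq> q \<and> p \<in> {j, k} \<and> q \<in> {j, k} then f p q else 0)"
  using assms by (auto simp: mconj_pair_def mconj_eval_blocks mconj_eval_diag)

lemma mconj_weight_pair [simp]: "mconj_weight (mconj_pair d j k) = 0"
  by (simp add: mconj_pair_def mconj_diag_def)

lemma valid_mconj_pair [simp]: "valid_mconj d (mconj_pair d j k)"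
  by (simp add: mconj_pair_def mconj_diag_def)

definition mconj_swap_sym :: "real \<Rightarrow> nat \<Rightarrow> nat \<Rightarrow> mconj_term list" where
  "mconj_swap_sym s a b = mconj_id @ mconj_scale s (mconj_swap a b)"

lemma mconj_eval_swap_sym [simp]:
  "mconj_eval (mconj_swap_sym s a b) f p q = f p q + of_real s * f (transpose a b p) (transpose a b q)"
  by (simp add: mconj_swap_sym_def)

lemma mconj_weight_swap_sym [simp]: "mconj_weight (mconj_swap_sym s a b) = 1 + s"
  by (simp add: mconj_swap_sym_def)

lemma valid_mconj_swap_sym: "a < d \<Longrightarrow> b < d \<Longrightarrow> valid_mconj d (mconj_swap_sym s a b)"
  by (simp add: mconj_swap_sym_def valid_mconj_swap)

lemma index_sigma_x:
  "p < d \<Longrightarrow> q < d \<Longrightarrow>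
     sigma_x d j k $$ (p, q) = (if p = j \<and> q = k then 1 else 0) + (if p = k \<and> q = j then 1 else 0)"
  by (simp add: sigma_x_def ketbra_def)

lemma index_sigma_y:
  "p < d \<Longrightarrow> q < d \<Longrightarrow>
     sigma_y d j k $$ (p, q) = - \<i> * ((if p = j \<and> q = k then 1 else 0) - (if p = k \<and> q = j then 1 else 0))"
  by (simp add: sigma_y_def ketbra_def)

lemma index_sigma_z:
  "p < d \<Longrightarrow> q < d \<Longrightarrow>
     sigma_z d j $$ (p, q) = (if p = j \<and> q = j then 1 else 0) - (if p = j + 1 \<and> q = j + 1 then 1 else 0)"
  by (simp add: sigma_z_def ketbra_def)

lemma herm_basis_carrier: "B \<in> herm_basis d \<Longrightarrow> B \<in> carrier_mat d d"
  by (auto simp: herm_basis_def sigma_x_def sigma_y_def sigma_z_def ketbra_def)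

lemma herm_basis_cases:
  assumes "B \<in> herm_basis d"
  obtains (x) j k where "B = sigma_x d j k" "j < k" "k < d"
    | (y) j k where "B = sigma_y d j k" "j < k" "k < d"
    | (z) j where "B = sigma_z d j" "j + 1 < d"
  using assms unfolding herm_basis_def by blast

lemma zerospan_conj_isolates:
  assumes "valid_mconj d xs" "mconj_weight xs = 0" "B \<in> herm_basis d"
    and eval: "\<And>f p q. p < d \<Longrightarrow> q < d \<Longrightarrow> mconj_eval xs f p q = c f * B $$ (p, q)"
    and "c (\<lambda>p q. B $$ (p, q)) = 1"
    and "\<And>B'. B' \<in> herm_basis d \<Longrightarrow> B' \<noteq> B \<Longrightarrow> c (\<lambda>p q. B' $$ (p, q)) = 0"
  shows "\<exists>T \<in> zerospan_conj d. T B = B \<and> (\<forall>B' \<in> herm_basis d. B' \<noteq> B \<longrightarrow> T B' = 0\<^sub>m d d)"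
proof -
  obtain T where T: "T \<in> zerospan_conj d"
    and act: "\<And>A. A \<in> carrier_mat d d \<Longrightarrow> T A = mat d d (\<lambda>(p, q). mconj_eval xs (\<lambda>i j. A $$ (i, j)) p q)"
    using zerospan_conj_mconj_eval[OF assms(1,2)] by blast
  have B: "B \<in> carrier_mat d d"
    using assms(3) by (rule herm_basis_carrier)
  have "T A = c (\<lambda>p q. A $$ (p, q)) \<cdot>\<^sub>m B" if "A \<in> carrier_mat d d" for A
    using B by (auto simp: act[OF that] eval intro!: eq_matI)
  moreover have "0 \<cdot>\<^sub>m B = 0\<^sub>m d d"
    using B by (intro eq_matI) auto
  ultimately show ?thesis
    using B assms(3-6) herm_basis_carrier by (intro bexI[OF _ T]) auto
qed

definition mconj_x :: "nat \<Rightarrow> nat \<Rightarrow> nat \<Rightarrow> mconj_term list" where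
  "mconj_x d j k = mconj_scale (1 / 2) (mconj_comp (mconj_swap_sym 1 j k) (mconj_pair d j k))"

definition mconj_y :: "nat \<Rightarrow> nat \<Rightarrow> nat \<Rightarrow> mconj_term list" where
  "mconj_y d j k = mconj_scale (1 / 2) (mconj_comp (mconj_swap_sym (-1) j k) (mconj_pair d j k))"

lemma mconj_eval_x:
  assumes "j < k" "k < d" "p < d" "q < d"
  shows "mconj_eval (mconj_x d j k) f p q = (f j k + f k j) / 2 * sigma_x d j k $$ (p, q)"
  using assms by (auto simp: mconj_x_def mconj_eval_pair index_sigma_x transpose_def)

lemma mconj_eval_y:
  assumes "j < k" "k < d" "p < d" "q < d"
  shows "mconj_eval (mconj_y d j k) f p q = \<i> * (f j k - f k j) / 2 * sigma_y d j k $$ (p, q)"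
  using assms by (auto simp: mconj_y_def mconj_eval_pair index_sigma_y transpose_def)
    (auto simp: ring_distribs mult.commute mult.left_commute)

lemma zerospan_conj_isolates_sigma_x:
  assumes "j < k" "k < d"
  shows "\<exists>T \<in> zerospan_conj d. T (sigma_x d j k) = sigma_x d j k \<and>
           (\<forall>B' \<in> herm_basis d. B' \<noteq> sigma_x d j k \<longrightarrow> T B' = 0\<^sub>m d d)"
proof (rule zerospan_conj_isolates)
  show "valid_mconj d (mconj_x d j k)"
    using assms by (simp add: mconj_x_def valid_mconj_comp valid_mconj_swap_sym)
  show "mconj_weight (mconj_x d j k) = 0"
    by (simp add: mconj_x_def)
  show "sigma_x d j k \<in> herm_basis d"
    using assms by (auto simp: herm_basis_def)
  show "mconj_eval (mconj_x d j k) f p q = (\<lambda>f. (f j k + f k j) / 2) f * sigma_x d j k $$ (p, q)"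
    if "p < d" "q < d" for f p q
    using assms that by (simp add: mconj_eval_x)
  show "(\<lambda>f. (f j k + f k j) / 2) (\<lambda>p q. sigma_x d j k $$ (p, q)) = 1"
    using assms by (simp add: index_sigma_x)
  show "(\<lambda>f. (f j k + f k j) / 2) (\<lambda>p q. B' $$ (p, q)) = 0"
    if "B' \<in> herm_basis d" "B' \<noteq> sigma_x d j k" for B'
    using that(1)
  proof (cases rule: herm_basis_cases)
    case (x j' k')
    with that(2) assms show ?thesis
      by (auto simp: index_sigma_x)
  qed (use assms in \<open>auto simp: index_sigma_y index_sigma_z\<close>)
qed

lemma zerospan_conj_isolates_sigma_y:
  assumes "j < k" "k < d"
  shows "\<exists>T \<in> zerospan_conj d. T (sigma_y d j k) = sigma_y d j k \<and>
           (\<forall>B' \<in> herm_basis d. B' \<noteq> sigma_y d j k \<longrightarrow> T B' = 0\<^sub>m d d)"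
proof (rule zerospan_conj_isolates)
  show "valid_mconj d (mconj_y d j k)"
    using assms by (simp add: mconj_y_def valid_mconj_comp valid_mconj_swap_sym)
  show "mconj_weight (mconj_y d j k) = 0"
    by (simp add: mconj_y_def)
  show "sigma_y d j k \<in> herm_basis d"
    using assms by (auto simp: herm_basis_def)
  show "mconj_eval (mconj_y d j k) f p q = (\<lambda>f. \<i> * (f j k - f k j) / 2) f * sigma_y d j k $$ (p, q)"
    if "p < d" "q < d" for f p q
    using assms that by (simp add: mconj_eval_y)
  show "(\<lambda>f. \<i> * (f j k - f k j) / 2) (\<lambda>p q. sigma_y d j k $$ (p, q)) = 1"
    using assms by (simp add: index_sigma_y)
  show "(\<lambda>f. \<i> * (f j k - f k j) / 2) (\<lambda>p q. B' $$ (p, q)) = 0"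
    if "B' \<in> herm_basis d" "B' \<noteq> sigma_y d j k" for B'
    using that(1)
  proof (cases rule: herm_basis_cases)
    case (y j' k')
    with that(2) assms show ?thesis
      by (auto simp: index_sigma_y)
  qed (use assms in \<open>auto simp: index_sigma_x index_sigma_z\<close>)
qed

definition mconj_gather :: "nat \<Rightarrow> nat list \<Rightarrow> mconj_term list" where
  "mconj_gather x as = concat (map (mconj_swap x) as)"

lemma mconj_eval_gather:
  "mconj_eval (mconj_gather x as) f p q = (\<Sum>a\<leftarrow>as. f (transpose x a p) (transpose x a q))"
  by (simp add: mconj_gather_def mconj_eval_concat)

lemma valid_mconj_gather: "x < d \<Longrightarrow> (\<And>a. a \<in> set as \<Longrightarrow> a < d) \<Longrightarrow> valid_mconj d (mconj_gather x as)"
  unfolding mconj_gather_def by (intro valid_mconj_concat valid_mconj_swap)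

text \<open>On traceless \<open>f\<close> this equals \<open>\<Sum>\<^sub>a\<^sub>\<le>\<^sub>j f a a\<close>, the \<open>\<sigma>\<^sub>z\<^sup>j\<close>-coordinate of the diagonal; the
  form that does not assume tracelessness is the one a combination of permutations produces.\<close>

definition sigma_z_coord :: "nat \<Rightarrow> nat \<Rightarrow> (nat \<Rightarrow> nat \<Rightarrow> complex) \<Rightarrow> complex" where
  "sigma_z_coord d j f =
     (of_nat (d - j - 1) * (\<Sum>a\<le>j. f a a) - of_nat (j + 1) * (\<Sum>b\<in>{j<..<d}. f b b)) / of_nat d"

text \<open>The multiple of the identity cancels the terms in which \<open>transpose\<close> fixes the index, at
  positions \<open>(j, j)\<close> and \<open>(j + 1, j + 1)\<close>.\<close>

definition mconj_z_core :: "nat \<Rightarrow> nat \<Rightarrow> mconj_term list" where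
  "mconj_z_core d j =
     mconj_scale (real (d - j - 1)) (mconj_gather j [0..<j + 1])
     @ mconj_scale (real (j + 1)) (mconj_gather (j + 1) [j + 1..<d])
     @ mconj_scale (- (real (j + 1) * real (d - j - 1))) mconj_id"

lemma mconj_eval_z_core_diff:
  assumes "j + 1 < d"
  shows "mconj_eval (mconj_z_core d j) f j j - mconj_eval (mconj_z_core d j) f (j + 1) (j + 1)
           = of_nat d * sigma_z_coord d j f"
proof -
  define m n :: complex where "m = of_nat (d - j - 1)" and "n = of_nat (j + 1)"
  let ?low = "mconj_gather j [0..<j + 1]" and ?high = "mconj_gather (j + 1) [j + 1..<d]"
  have core: "mconj_eval (mconj_z_core d j) f x x
      = m * mconj_eval ?low f x x + n * mconj_eval ?high f x x - n * m * f x x" for x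
    by (simp add: mconj_z_core_def m_def n_def algebra_simps)
  have "mconj_eval ?low f j j = (\<Sum>a\<le>j. f a a)"
    by (simp add: mconj_eval_gather interv_sum_list_conv_sum_set_nat atLeast0LessThan lessThan_Suc_atMost
        del: upt_Suc)
  moreover have "mconj_eval ?high f (j + 1) (j + 1) = (\<Sum>b\<in>{j<..<d}. f b b)"
    by (simp add: mconj_eval_gather interv_sum_list_conv_sum_set_nat atLeastSucLessThan_greaterThanLessThan)
  moreover have "mconj_eval ?high f j j = (\<Sum>b\<leftarrow>[j + 1..<d]. f j j)"
    unfolding mconj_eval_gather by (intro arg_cong[where f = sum_list] map_cong) auto
  then have "mconj_eval ?high f j j = m * f j j"
    by (simp add: sum_list_triv m_def)
  moreover have "mconj_eval ?low f (j + 1) (j + 1) = (\<Sum>a\<leftarrow>[0..<j + 1]. f (j + 1) (j + 1))"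
    unfolding mconj_eval_gather by (intro arg_cong[where f = sum_list] map_cong) auto
  then have "mconj_eval ?low f (j + 1) (j + 1) = n * f (j + 1) (j + 1)"
    by (simp only: sum_list_triv length_upt n_def) simp
  ultimately have "mconj_eval (mconj_z_core d j) f j j - mconj_eval (mconj_z_core d j) f (j + 1) (j + 1)
      = m * (\<Sum>a\<le>j. f a a) - n * (\<Sum>b\<in>{j<..<d}. f b b)"
    by (simp only: core) (simp add: algebra_simps)
  also have "\<dots> = of_nat d * sigma_z_coord d j f"
    using assms by (simp add: sigma_z_coord_def m_def n_def)
  finally show ?thesis .
qed

definition mconj_z :: "nat \<Rightarrow> nat \<Rightarrow> mconj_term list" where
  "mconj_z d j = mconj_scale (1 / real d)
     (mconj_comp (mconj_swap_sym (-1) j (j + 1)) (mconj_comp (mconj_diag d) (mconj_z_core d j)))"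

lemma mconj_eval_z:
  assumes "j + 1 < d" "p < d" "q < d"
  shows "mconj_eval (mconj_z d j) f p q = sigma_z_coord d j f * sigma_z d j $$ (p, q)"
proof -
  let ?\<tau> = "transpose j (j + 1)" and ?g = "mconj_eval (mconj_z_core d j) f"
  have \<tau>: "?\<tau> p < d" "?\<tau> q < d" "?\<tau> p = ?\<tau> q \<longleftrightarrow> p = q"
    using assms by (auto simp: transpose_def)
  have "mconj_eval (mconj_z d j) f p q
      = (if p = q then (?g p p - ?g (?\<tau> p) (?\<tau> p)) / of_nat d else 0)"
    using assms \<tau> by (simp add: mconj_z_def mconj_eval_diag diff_divide_distrib)
  also have "\<dots> = sigma_z_coord d j f * sigma_z d j $$ (p, q)"
    using mconj_eval_z_core_diff[OF assms(1), of f] assms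
    by (auto simp: index_sigma_z transpose_def field_simps)
  finally show ?thesis .
qed

lemma sigma_z_coord_sigma_z:
  assumes "i + 1 < d" "j + 1 < d"
  shows "sigma_z_coord d j (\<lambda>p q. sigma_z d i $$ (p, q)) = (if i = j then 1 else 0)"
proof -
  have "(\<Sum>a\<le>j. sigma_z d i $$ (a, a)) = (\<Sum>a\<le>j. (if a = i then 1 else 0) - (if a = i + 1 then 1 else 0))"
    using assms(2) by (intro sum.cong) (auto simp: index_sigma_z)
  also have "\<dots> = (if i = j then 1 else 0)"
    by (simp add: sum_subtractf)
  finally have low: "(\<Sum>a\<le>j. sigma_z d i $$ (a, a)) = (if i = j then 1 else 0)" .
  have "(\<Sum>b\<in>{j<..<d}. sigma_z d i $$ (b, b))
      = (\<Sum>b\<in>{j<..<d}. (if b = i then 1 else 0) - (if b = i + 1 then 1 else 0))"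
    by (intro sum.cong) (auto simp: index_sigma_z)
  also have "\<dots> = - (if i = j then 1 else 0)"
    using assms(1) by (simp add: sum_subtractf)
  finally have high: "(\<Sum>b\<in>{j<..<d}. sigma_z d i $$ (b, b)) = - (if i = j then 1 else 0)" .
  have "(of_nat (d - j - 1) + of_nat (j + 1) :: complex) = of_nat d"
    using assms(2) by (simp flip: of_nat_add)
  then show ?thesis
    using assms by (simp add: sigma_z_coord_def low high)
qed

lemma sigma_z_coord_eq_0:
  assumes "j < d" "\<And>a. a < d \<Longrightarrow> f a a = 0"
  shows "sigma_z_coord d j f = 0"
  using assms by (simp add: sigma_z_coord_def)

lemma zerospan_conj_isolates_sigma_z:
  assumes "j + 1 < d"
  shows "\<exists>T \<in> zerospan_conj d. T (sigma_z d j) = sigma_z d j \<and>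
           (\<forall>B' \<in> herm_basis d. B' \<noteq> sigma_z d j \<longrightarrow> T B' = 0\<^sub>m d d)"
proof (rule zerospan_conj_isolates)
  have "valid_mconj d (mconj_z_core d j)"
    using assms unfolding mconj_z_core_def by (auto intro!: valid_mconj_gather)
  then show "valid_mconj d (mconj_z d j)"
    using assms by (simp add: mconj_z_def mconj_diag_def valid_mconj_comp valid_mconj_swap_sym)
  show "mconj_weight (mconj_z d j) = 0"
    by (simp add: mconj_z_def)
  show "sigma_z d j \<in> herm_basis d"
    using assms by (auto simp: herm_basis_def)
  show "mconj_eval (mconj_z d j) f p q = sigma_z_coord d j f * sigma_z d j $$ (p, q)"
    if "p < d" "q < d" for f p q
    using assms that by (rule mconj_eval_z)
  show "sigma_z_coord d j (\<lambda>p q. sigma_z d j $$ (p, q)) = 1"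
    using assms by (simp add: sigma_z_coord_sigma_z)
  show "sigma_z_coord d j (\<lambda>p q. B' $$ (p, q)) = 0"
    if "B' \<in> herm_basis d" "B' \<noteq> sigma_z d j" for B'
    using that(1)
  proof (cases rule: herm_basis_cases)
    case (z i)
    with that(2) assms show ?thesis
      by (auto simp: sigma_z_coord_sigma_z)
  qed (use assms in \<open>auto intro!: sigma_z_coord_eq_0 simp: index_sigma_x index_sigma_y\<close>)
qed

theorem lemma1:
  fixes d :: nat and B :: "complex mat"
  assumes "B \<in> herm_basis d"
  shows "\<exists>T \<in> zerospan_conj d. T B = B \<and>
           (\<forall>B' \<in> herm_basis d. B' \<noteq> B \<longrightarrow> T B' = 0\<^sub>m d d)"
  using assms
proof (cases rule: herm_basis_cases)
  case (x j k)
  then show ?thesis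
    using zerospan_conj_isolates_sigma_x by blast
next
  case (y j k)
  then show ?thesis
    using zerospan_conj_isolates_sigma_y by blast
next
  case (z j)
  then show ?thesis
    using zerospan_conj_isolates_sigma_z by blast
qed

end
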